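(* Let $P$ be a simple orthogonal polygon that has at least two N-extremities, and let $e$ be a lowermost N-extremity of $P$. Then for each $\theta\in(0,\pi/2)$: (i) for any N-extremity $e'$ of $P$ at a greater $y$-coordinate than $e$, no point of $e'$ belongs to $\{0^\circ,90^\circ\}$-Kernel$_\theta(P)$; (ii) if there is an N-extremity $e''\neq e$ at the same $y$-coordinate as $e$, then no point of $e$ and no point of $e''$ belongs to $\{0^\circ,90^\circ\}$-Kernel$_\theta(P)$. Analogous statements hold for E-, S- and W-extremities: if $P$ has at least two S-extremities and $e$ is a topmost one, then (i) no point of an S-extremity at smaller $y$-coordinate than $e$, and (ii) if another S-extremity lies at the same $y$-coordinate as $e$, no point of either of them, belongs to the kernel; if $P$ has at least two E-extremities and $e$ is a leftmost one, then (i) no point of an E-extremity at greater $x$-coordinate than $e$, and (ii) if another E-extremity lies at the same $x$-coordinate as $e$, no point of either of them, belongs to the kernel; if $P$ has at least two W-extremities and $e$ is a rightmost one, then (i) no point of a W-extremity at smaller $x$-coordinate than $e$, and (ii) if another W-extremity lies at the same $x$-coordinate as $e$, no point of either of them, belongs to the kernel (all for each $\theta\in(0,\pi/2)$).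
   Context: An orthogonal polygon is a polygon all of whose edges are horizontal or vertical. An edge is an N-edge (resp. S-, E-, W-edge) if it bounds the polygon from the north (resp. south, east, west), i.e. the interior of $P$ lies immediately below (resp. above, to the left, to the right) of it. For $D\in\{N,S,E,W\}$, a $D$-edge is a $D$-extremity if both its endpoints are convex vertices of $P$. For an angle $\beta$, a curve is $\beta$-convex if its intersection with every line forming counterclockwise angle $\beta$ with the positive $x$-axis is connected. For $\theta\in[0,\pi/2)$, two points $p,q\in P$ see each other with respect to $\{0^\circ,90^\circ\}$ rotated by $\theta$ if some curve contained in $P$ connecting them is both $\theta$-convex and $(\theta+90^\circ)$-convex; $\{0^\circ,90^\circ\}$-Kernel$_\theta(P)$ is the set of points of $P$ that see every point of $P$ in this sense. *)

theory Defs
  imports "HOL-Analysis.Analysis"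
begin

text \<open>Points of the plane are pairs (x,y) :: real \<times> real.
An orthogonal polygon is given by its cyclic list of vertices vs = [v0,...,v(n-1)];
edge i joins vs!i and vs!((i+1) mod n).\<close>

fun polypath :: "(real \<times> real) list \<Rightarrow> real \<Rightarrow> real \<times> real" where
  "polypath [] = linepath 0 0"
| "polypath [a] = linepath a a"
| "polypath [a, b] = linepath a b"
| "polypath (a # b # c # rest) = linepath a b +++ polypath (b # c # rest)"

definition boundary_path :: "(real \<times> real) list \<Rightarrow> real \<Rightarrow> real \<times> real" where
  "boundary_path vs = polypath (vs @ [hd vs])"

definition nxt :: "(real \<times> real) list \<Rightarrow> nat \<Rightarrow> nat" where
  "nxt vs i = (Suc i) mod length vs"

definition prv :: "(real \<times> real) list \<Rightarrow> nat \<Rightarrow> nat" where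
  "prv vs i = (i + length vs - 1) mod length vs"

text \<open>Simple orthogonal polygon: at least 4 vertices, every edge is non-degenerate and
horizontal or vertical, horizontal and vertical edges alternate (so every vertex is a
genuine right-angle corner), and the boundary is a simple closed curve.\<close>
definition orth_polygon :: "(real \<times> real) list \<Rightarrow> bool" where
  "orth_polygon vs \<longleftrightarrow>
     length vs \<ge> 4 \<and>
     (\<forall>i < length vs. vs ! i \<noteq> vs ! nxt vs i \<and>
        (fst (vs ! i) = fst (vs ! nxt vs i) \<or> snd (vs ! i) = snd (vs ! nxt vs i))) \<and>
     (\<forall>i < length vs. (fst (vs ! i) = fst (vs ! nxt vs i)) \<longleftrightarrow>
                       (snd (vs ! nxt vs i) = snd (vs ! nxt vs (nxt vs i)))) \<and>
     simple_path (boundary_path vs)"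

definition poly_interior :: "(real \<times> real) list \<Rightarrow> (real \<times> real) set" where
  "poly_interior vs = inside (path_image (boundary_path vs))"

definition poly_region :: "(real \<times> real) list \<Rightarrow> (real \<times> real) set" where
  "poly_region vs = path_image (boundary_path vs) \<union> poly_interior vs"

definition edge_seg :: "(real \<times> real) list \<Rightarrow> nat \<Rightarrow> (real \<times> real) set" where
  "edge_seg vs i = closed_segment (vs ! i) (vs ! nxt vs i)"

datatype dir = N | S | E | W

text \<open>Outward normal of a D-edge: the interior of P lies immediately on the side of -dvec D.\<close>
fun dvec :: "dir \<Rightarrow> real \<times> real" where
  "dvec N = (0, 1)" | "dvec S = (0, -1)" | "dvec E = (1, 0)" | "dvec W = (-1, 0)"

definition D_edge :: "(real \<times> real) list \<Rightarrow> dir \<Rightarrow> nat \<Rightarrow> bool" where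
  "D_edge vs D i \<longleftrightarrow> i < length vs \<and>
     (vs ! nxt vs i - vs ! i) \<bullet> dvec D = 0 \<and>
     (\<exists>\<epsilon>>0. \<forall>t. 0 < t \<and> t < \<epsilon> \<longrightarrow>
        midpoint (vs ! i) (vs ! nxt vs i) - t *\<^sub>R dvec D \<in> poly_interior vs)"

text \<open>Vertex i is convex (interior angle 90 degrees): the open quadrant spanned by its
two incident edges is locally contained in the interior of P.\<close>
definition convex_vertex :: "(real \<times> real) list \<Rightarrow> nat \<Rightarrow> bool" where
  "convex_vertex vs i \<longleftrightarrow>
     (\<exists>\<epsilon>>0. \<forall>t. 0 < t \<and> t < \<epsilon> \<longrightarrow>
        vs ! i + t *\<^sub>R ((vs ! prv vs i - vs ! i) + (vs ! nxt vs i - vs ! i)) \<in> poly_interior vs)"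

definition extremity :: "(real \<times> real) list \<Rightarrow> dir \<Rightarrow> nat \<Rightarrow> bool" where
  "extremity vs D i \<longleftrightarrow> D_edge vs D i \<and> convex_vertex vs i \<and> convex_vertex vs (nxt vs i)"

text \<open>Level of a point in direction D: y for N, -y for S, x for E, -x for W.
A lowermost N-extremity / topmost S / leftmost E / rightmost W extremity is one of
minimal level.\<close>
definition level :: "dir \<Rightarrow> real \<times> real \<Rightarrow> real" where
  "level D p = p \<bullet> dvec D"

definition line_at :: "real \<Rightarrow> real \<times> real \<Rightarrow> (real \<times> real) set" where
  "line_at \<beta> c = {c + t *\<^sub>R (cos \<beta>, sin \<beta>) | t. True}"

definition beta_convex :: "real \<Rightarrow> (real \<Rightarrow> real \<times> real) \<Rightarrow> bool" where
  "beta_convex \<beta> g \<longleftrightarrow> (\<forall>c. connected (path_image g \<inter> line_at \<beta> c))"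

definition sees_theta :: "(real \<times> real) set \<Rightarrow> real \<Rightarrow> real \<times> real \<Rightarrow> real \<times> real \<Rightarrow> bool" where
  "sees_theta P \<theta> p q \<longleftrightarrow> (\<exists>g. path g \<and> path_image g \<subseteq> P \<and> pathstart g = p \<and>
      pathfinish g = q \<and> beta_convex \<theta> g \<and> beta_convex (\<theta> + pi / 2) g)"

definition kernel_theta :: "(real \<times> real) set \<Rightarrow> real \<Rightarrow> (real \<times> real) set" where
  "kernel_theta P \<theta> = {p \<in> P. \<forall>q \<in> P. sees_theta P \<theta> p q}"

end

theory Submission
  imports Defs
begin

text \<open>
  Let e = AB be a D-extremity and p a point of the kernel. Near e the polygon lies on the
  inner side of e and, because A and B are convex vertices, between the two perpendiculars
  to e through A and B; this is where the Jordan curve theorem is used. Among the directions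
  \<theta> and \<theta> + 90 degrees we choose a line through A and one through B that meet P near A,
  resp. B, only in that point. A curve from p to A (resp. B) that is convex in both directions
  cannot cross its line, so p lies in the wedge cut out by the two lines. A curve from a point
  of the wedge beyond e to A would have to cross the line through B twice, once beyond e and
  once at B or before it, and its connected section by that line would contain points just
  beyond B, which are outside P. Hence every kernel point has level at most that of each
  D-extremity, with equality only on the extremity itself, and distinct D-extremities are
  disjoint.
\<close>

lemma simple_loop_image_subset_closure_outside:
  fixes c :: "real \<Rightarrow> real \<times> real"
  assumes "simple_path c" "pathfinish c = pathstart c"
  shows "path_image c \<subseteq> closure (outside (path_image c))"
proof -
  let ?S = "path_image c"
  have "?S homeomorphic sphere (0::complex) 1"
    by (rule homeomorphic_simple_path_image_circle[OF assms]) simp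
  also have "sphere (0::complex) 1 homeomorphic sphere (0::real \<times> real) 1"
    by (rule homeomorphic_spheres_gen) simp_all
  finally have hom: "?S homeomorphic sphere (0::real \<times> real) 1" .
  obtain x where x: "x \<in> outside ?S"
    using outside_bounded_nonempty[OF bounded_simple_path_image[OF assms(1)]] by blast
  define T where "T = connected_component_set (- ?S) x"
  have "x \<in> - ?S"
    using x outside_no_overlap by blast
  then have "T \<in> components (- ?S)"
    unfolding T_def by (rule componentsI)
  then have "frontier T = ?S"
    using Jordan_Brouwer_frontier[OF hom] by simp
  then have "?S \<subseteq> closure T"
    unfolding frontier_def by blast
  moreover have "T \<subseteq> outside ?S"
    unfolding T_def using x outside_same_component by blast
  ultimately show ?thesis
    using closure_mono by blast
qed

lemma connected_isolated_point:
  fixes X :: "'a::metric_space set"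
  assumes "connected X" "q \<in> X" "r > 0" "\<forall>w\<in>X. w \<noteq> q \<longrightarrow> r \<le> dist w q"
  shows "X = {q}"
proof -
  have "X \<subseteq> ball q r \<union> - cball q (r / 2)"
    using assms(3,4) by (auto simp: dist_commute)
  moreover have "ball q r \<inter> - cball q (r / 2) \<inter> X = {}"
    using assms(4) by (auto simp: dist_commute)
  moreover have "ball q r \<inter> X \<noteq> {}"
    using assms(2,3) centre_in_ball by blast
  ultimately have "- cball q (r / 2) \<inter> X = {}"
    using connectedD[OF assms(1) open_ball open_Compl[OF closed_cball]] by blast
  then have "X \<subseteq> cball q (r / 2)"
    by blast
  then show ?thesis
    using assms(2-4) by (fastforce simp: dist_commute)
qed
lemma connected_nonpos_if_nonpos_near_zeros:
  fixes f :: "'a::metric_space \<Rightarrow> real"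
  assumes f: "continuous_on UNIV f" and K: "connected K" "a \<in> K" "a \<in> Z"
    and zeros: "\<forall>w\<in>K. f w = 0 \<longrightarrow> w \<in> Z"
    and near: "r > 0" "\<forall>z\<in>Z. \<forall>w\<in>K. dist w z < r \<longrightarrow> f w \<le> 0"
  shows "\<forall>w\<in>K. f w \<le> 0"
proof -
  let ?U = "{w. 0 < f w}"
  let ?V = "{w. f w < 0} \<union> (\<Union>z\<in>Z. ball z r)"
  have "open ?U" "open ?V"
    using f by (auto intro!: open_Collect_less open_Un open_UN)
  moreover have "?U \<inter> ?V \<inter> K = {}"
  proof -
    have "\<not> 0 < f w" if "w \<in> K" "z \<in> Z" "w \<in> ball z r" for w z
      using near(2) that by (simp add: dist_commute not_less)
    then show ?thesis by auto
  qed
  moreover have "K \<subseteq> ?U \<union> ?V"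
  proof
    fix w assume w: "w \<in> K"
    show "w \<in> ?U \<union> ?V"
    proof (cases "f w = 0")
      case True
      then have "w \<in> ball w r" "w \<in> Z" using zeros w near(1) by auto
      then show ?thesis by blast
    qed auto
  qed
  moreover have "?V \<inter> K \<noteq> {}"
    using K(2,3) near(1) centre_in_ball by blast
  ultimately have "?U \<inter> K = {}"
    using connectedD[OF K(1)] by blast
  then show ?thesis
    by (auto simp: not_less[symmetric])
qed

lemma line_at_eq_hyperplane: "line_at \<beta> c = {w. (w - c) \<bullet> (- sin \<beta>, cos \<beta>) = 0}"
proof (intro set_eqI iffI)
  fix w assume "w \<in> line_at \<beta> c"
  then show "w \<in> {w. (w - c) \<bullet> (- sin \<beta>, cos \<beta>) = 0}"
    by (auto simp: line_at_def algebra_simps)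
next
  fix w assume "w \<in> {w. (w - c) \<bullet> (- sin \<beta>, cos \<beta>) = 0}"
  moreover obtain a b where ab: "w - c = (a, b)" by fastforce
  ultimately have e: "b * cos \<beta> = a * sin \<beta>" by (simp add: algebra_simps)
  have s: "sin \<beta> ^ 2 + cos \<beta> ^ 2 = 1" by simp
  have "(a * cos \<beta> + b * sin \<beta>) * cos \<beta> = a" "(a * cos \<beta> + b * sin \<beta>) * sin \<beta> = b"
    using e s by algebra+
  then have "w = c + (a * cos \<beta> + b * sin \<beta>) *\<^sub>R (cos \<beta>, sin \<beta>)"
    using ab by (simp add: prod_eq_iff algebra_simps)
  then show "w \<in> line_at \<beta> c"
    unfolding line_at_def by blast
qed

lemma connected_subset_line_imp_convex:
  fixes X :: "(real \<times> real) set"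
  assumes "X \<subseteq> line_at \<beta> c" "connected X"
  shows "convex X"
proof -
  define d :: "real \<times> real" where "d = (cos \<beta>, sin \<beta>)"
  define \<phi> where "\<phi> w = (w - c) \<bullet> d" for w
  have "c + \<phi> w *\<^sub>R d = w" if w: "w \<in> line_at \<beta> c" for w
  proof -
    obtain t where "w = c + t *\<^sub>R d"
      using w unfolding line_at_def d_def by blast
    moreover have "d \<bullet> d = 1"
      by (simp add: d_def flip: power2_eq_square)
    ultimately show ?thesis
      by (simp add: \<phi>_def)
  qed
  then have "(\<lambda>w. c + \<phi> w *\<^sub>R d) ` X = id ` X"
    using assms(1) by (intro image_cong) auto
  then have "X = (+) c ` (\<lambda>t. t *\<^sub>R d) ` \<phi> ` X"
    by (simp add: image_image)
  moreover have "connected (\<phi> ` X)"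
    unfolding \<phi>_def by (rule connected_continuous_image[OF _ assms(2)]) (intro continuous_intros)
  then have "convex (\<phi> ` X)"
    by (simp add: connected_convex_1)
  ultimately show ?thesis
    by (metis convex_linear_image convex_translation bounded_linear_scaleR_left
        bounded_linear.linear)
qed

lemma path_last_visit:
  fixes g :: "real \<Rightarrow> 'a::topological_space"
  assumes "path g" "closed C"
  obtains t where "0 \<le> t" "t \<le> 1" "t = 0 \<or> g t \<in> C" "\<And>s. t < s \<Longrightarrow> s \<le> 1 \<Longrightarrow> g s \<notin> C"
proof -
  define T where "T = insert 0 ({0..1} \<inter> g -` C)"
  have "closed ({0..1} \<inter> g -` C)"
    using assms continuous_closed_preimage[of "{0..1}" g C] by (simp add: path_def)
  then have "closed T" "T \<noteq> {}" "bdd_above T"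
    unfolding T_def by (auto intro!: bdd_above_mono[OF bdd_above_Icc[of 0 1]])
  then have "Sup T \<in> T" "\<And>s. s \<in> T \<Longrightarrow> s \<le> Sup T"
    by (auto intro: closed_contains_Sup cSup_upper)
  show thesis
  proof (rule that[of "Sup T"])
    show "0 \<le> Sup T" "Sup T \<le> 1" "Sup T = 0 \<or> g (Sup T) \<in> C"
      using \<open>Sup T \<in> T\<close> by (auto simp: T_def)
    show "g s \<notin> C" if "Sup T < s" "s \<le> 1" for s
    proof
      assume "g s \<in> C"
      with that \<open>0 \<le> Sup T\<close> have "s \<in> T"
        by (simp add: T_def)
      then show False
        using that(1) \<open>\<And>s. s \<in> T \<Longrightarrow> s \<le> Sup T\<close> by fastforce
    qed
  qed
qed
definition poly_seg :: "(real \<times> real) list \<Rightarrow> nat \<Rightarrow> (real \<times> real) set" where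
  "poly_seg xs i = closed_segment (xs ! i) (xs ! Suc i)"

lemma poly_seg_Cons_Suc [simp]: "poly_seg (a # xs) (Suc i) = poly_seg xs i"
  by (simp add: poly_seg_def)

lemma poly_seg_Cons_0 [simp]: "poly_seg (a # b # xs) 0 = closed_segment a b"
  by (simp add: poly_seg_def)

lemma pathstart_polypath: "xs \<noteq> [] \<Longrightarrow> pathstart (polypath xs) = hd xs"
  by (induction xs rule: polypath.induct) auto

lemma pathfinish_polypath: "xs \<noteq> [] \<Longrightarrow> pathfinish (polypath xs) = last xs"
  by (induction xs rule: polypath.induct) auto

lemma path_image_polypath:
  "length xs \<ge> 2 \<Longrightarrow> path_image (polypath xs) = (\<Union>i<length xs - 1. poly_seg xs i)"
proof (induction xs rule: polypath.induct)
  case (3 a b)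
  have "{..<Suc 0} = {0::nat}" by auto
  then show ?case by (simp add: poly_seg_def)
next
  case (4 a b c rest)
  have "{..<length (a # b # c # rest) - 1} = insert 0 (Suc ` {..<length (b # c # rest) - 1})"
    by (simp add: lessThan_Suc_eq_insert_0)
  then show ?case
    using 4 by (simp add: path_image_join pathstart_polypath)
qed auto

definition segments_form_arc :: "(real \<times> real) list \<Rightarrow> bool" where
  "segments_form_arc xs \<longleftrightarrow> (\<forall>i < length xs - 1. xs ! i \<noteq> xs ! Suc i) \<and>
     (\<forall>i j. i < j \<longrightarrow> j < length xs - 1 \<longrightarrow>
        poly_seg xs i \<inter> poly_seg xs j \<subseteq> (if j = Suc i then {xs ! j} else {}))"

lemma segments_form_arc_first_vertex:
  assumes "segments_form_arc xs" "0 < j" "j < length xs - 1"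
  shows "xs ! 0 \<notin> poly_seg xs j"
proof
  assume "xs ! 0 \<in> poly_seg xs j"
  moreover have "xs ! 0 \<in> poly_seg xs 0"
    by (simp add: poly_seg_def)
  ultimately have "xs ! 0 \<in> (if j = Suc 0 then {xs ! j} else {})"
    using assms unfolding segments_form_arc_def by blast
  then have "xs ! 0 = xs ! Suc 0"
    by (auto split: if_splits)
  then show False
    using assms unfolding segments_form_arc_def by auto
qed

lemma segments_form_arc_last_vertex:
  assumes "segments_form_arc xs" "j + 2 < length xs"
  shows "xs ! (length xs - 1) \<notin> poly_seg xs j"
proof
  let ?l = "length xs - 2"
  have l: "Suc ?l = length xs - 1" "j < ?l" "?l < length xs - 1"
    using assms(2) by auto
  have seg: "poly_seg xs j \<inter> poly_seg xs ?l \<subseteq> (if ?l = Suc j then {xs ! ?l} else {})"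
    "xs ! ?l \<noteq> xs ! Suc ?l"
    using assms(1) l(2,3) unfolding segments_form_arc_def by blast+
  assume "xs ! (length xs - 1) \<in> poly_seg xs j"
  moreover have "xs ! (length xs - 1) \<in> poly_seg xs ?l"
    using l(1) by (simp add: poly_seg_def)
  ultimately have "xs ! (length xs - 1) \<in> (if ?l = Suc j then {xs ! ?l} else {})"
    using seg(1) by blast
  then show False
    using seg(2) l(1) by (auto split: if_splits)
qed

lemma arc_polypath_segments: "arc (polypath xs) \<Longrightarrow> length xs \<ge> 2 \<Longrightarrow> segments_form_arc xs"
proof (induction xs rule: polypath.induct)
  case (3 a b)
  then show ?case
    using arc_distinct_ends[of "linepath a b"] by (auto simp: segments_form_arc_def)
next
  case (4 a b c rest)
  let ?t = "b # c # rest"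
  have arcs: "arc (linepath a b)" "arc (polypath ?t)"
    "closed_segment a b \<inter> path_image (polypath ?t) \<subseteq> {b}"
    using "4.prems"(1) arc_join_eq[of "linepath a b" "polypath ?t"] by (auto simp: pathstart_polypath)
  have IH: "segments_form_arc ?t"
    using 4 arcs by simp
  have "a \<noteq> b"
    using arcs(1) arc_distinct_ends by fastforce
  show ?case
    unfolding segments_form_arc_def
  proof (intro conjI allI impI)
    fix i assume "i < length (a # ?t) - 1"
    then show "(a # ?t) ! i \<noteq> (a # ?t) ! Suc i"
      using IH \<open>a \<noteq> b\<close> by (cases i) (auto simp: segments_form_arc_def)
  next
    fix i j assume ij: "i < j" "j < length (a # ?t) - 1"
    then obtain j' where j': "j = Suc j'"
      by (cases j) auto
    show "poly_seg (a # ?t) i \<inter> poly_seg (a # ?t) j \<subseteq> (if j = Suc i then {(a # ?t) ! j} else {})"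
    proof (cases i)
      case (Suc i')
      have "poly_seg ?t i' \<inter> poly_seg ?t j' \<subseteq> (if j' = Suc i' then {?t ! j'} else {})"
        using IH ij Suc j' unfolding segments_form_arc_def by auto
      then show ?thesis
        using Suc j' by (simp only: poly_seg_Cons_Suc nth_Cons_Suc nat.inject)
    next
      case 0
      have "poly_seg ?t j' \<subseteq> path_image (polypath ?t)"
        using ij j' by (auto simp: path_image_polypath)
      then have sub: "closed_segment a b \<inter> poly_seg ?t j' \<subseteq> {b}"
        using arcs(3) by blast
      show ?thesis
      proof (cases "j' = 0")
        case True
        then show ?thesis using sub 0 j' by simp
      next
        case False
        then have "b \<notin> poly_seg ?t j'"
          using segments_form_arc_first_vertex[OF IH, of j'] ij j' by simp
        then show ?thesis
          using sub 0 j' False by auto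
      qed
    qed
  qed
qed auto

lemma simple_loop_segments_disjoint:
  assumes n: "length vs \<ge> 3" and sp: "simple_path (polypath (vs @ [hd vs]))"
    and ij: "i < j" "j < length vs" "j \<noteq> Suc i" "\<not> (i = 0 \<and> j = length vs - 1)"
  shows "poly_seg (vs @ [hd vs]) i \<inter> poly_seg (vs @ [hd vs]) j = {}"
proof -
  define L where "L = vs @ [hd vs]"
  obtain v0 v1 c rest where Lf: "L = v0 # v1 # c # rest"
    using n unfolding L_def by (cases vs; cases "tl vs"; cases "tl (tl vs)") auto
  define T where "T = v1 # c # rest"
  have lenT: "length T = length vs"
    using arg_cong[OF Lf, of length] by (simp add: T_def L_def)
  have "v0 = hd vs"
    using Lf by (cases vs) (auto simp: L_def)
  then have last: "last T = v0"
    using Lf by (metis L_def T_def last.simps last_snoc list.distinct(1))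
  then have lastT: "T ! (length T - 1) = v0"
    by (metis T_def last_conv_nth list.distinct(1))
  have j: "arc (polypath T)" "closed_segment v0 v1 \<inter> path_image (polypath T) \<subseteq> {v0, v1}"
    using sp[folded L_def] simple_path_join_loop_eq[of "polypath T" "linepath v0 v1"] Lf last
    by (auto simp: T_def pathstart_polypath pathfinish_polypath)
  have A: "segments_form_arc T"
    by (rule arc_polypath_segments[OF j(1)]) (simp add: T_def)
  have sL: "poly_seg L (Suc m) = poly_seg T m" for m
    using Lf by (simp add: T_def)
  obtain j' where j': "j = Suc j'"
    using ij by (cases j) auto
  show ?thesis
  proof (cases i)
    case (Suc i')
    have "i' < j'" "j' < length T - 1"
      using ij Suc j' lenT by auto
    then have "poly_seg T i' \<inter> poly_seg T j' \<subseteq> (if j' = Suc i' then {T ! j'} else {})"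
      using A unfolding segments_form_arc_def by blast
    then show ?thesis
      using Suc j' sL ij by (simp add: L_def[symmetric])
  next
    case 0
    have jj: "0 < j'" "j' + 2 < length T"
      using ij 0 j' lenT by auto
    have "poly_seg T j' \<subseteq> path_image (polypath T)"
      using jj path_image_polypath[of T] by (auto simp: T_def)
    moreover have "v1 \<notin> poly_seg T j'" "v0 \<notin> poly_seg T j'"
      using segments_form_arc_first_vertex[OF A, of j'] segments_form_arc_last_vertex[OF A, of j']
        jj lastT by (auto simp: T_def)
    moreover have "poly_seg L 0 = closed_segment v0 v1"
      using Lf by simp
    ultimately show ?thesis
      using j(2) 0 j' sL by (auto simp: L_def[symmetric])
  qed
qed

lemma poly_seg_boundary:
  assumes "vs \<noteq> []" "i < length vs"
  shows "poly_seg (vs @ [hd vs]) i = edge_seg vs i"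
proof -
  have "(vs @ [hd vs]) ! Suc i = vs ! nxt vs i"
    using assms by (cases "Suc i = length vs") (auto simp: nxt_def nth_append hd_conv_nth)
  then show ?thesis
    using assms by (simp add: poly_seg_def edge_seg_def nth_append)
qed

lemma boundary_path_closed: "vs \<noteq> [] \<Longrightarrow> pathfinish (boundary_path vs) = pathstart (boundary_path vs)"
  by (simp add: boundary_path_def pathstart_polypath pathfinish_polypath)

lemma path_image_boundary_path:
  assumes "vs \<noteq> []"
  shows "path_image (boundary_path vs) = (\<Union>i<length vs. edge_seg vs i)"
proof -
  have "path_image (boundary_path vs) = (\<Union>i<length vs. poly_seg (vs @ [hd vs]) i)"
    using assms by (simp add: boundary_path_def path_image_polypath Suc_le_eq)
  also have "\<dots> = (\<Union>i<length vs. edge_seg vs i)"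
    using assms by (simp add: poly_seg_boundary)
  finally show ?thesis .
qed

lemma nxt_less: "i < length vs \<Longrightarrow> nxt vs i < length vs"
  unfolding nxt_def by (rule mod_less_divisor) linarith

lemma prv_less: "i < length vs \<Longrightarrow> prv vs i < length vs"
  unfolding prv_def by (rule mod_less_divisor) linarith

lemma nxt_prv: "k < length vs \<Longrightarrow> nxt vs (prv vs k) = k"
  by (cases k) (auto simp: nxt_def prv_def)

lemma prv_nxt: "k < length vs \<Longrightarrow> prv vs (nxt vs k) = k"
  by (cases "Suc k = length vs") (auto simp: nxt_def prv_def)

lemma orth_polygon_nonempty: "orth_polygon vs \<Longrightarrow> vs \<noteq> []"
  by (auto simp: orth_polygon_def)

lemma edge_nondegenerate: "orth_polygon vs \<Longrightarrow> i < length vs \<Longrightarrow> vs ! i \<noteq> vs ! nxt vs i"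
  by (simp add: orth_polygon_def)

lemma edge_seg_subset_boundary:
  "orth_polygon vs \<Longrightarrow> i < length vs \<Longrightarrow> edge_seg vs i \<subseteq> path_image (boundary_path vs)"
  by (auto simp: path_image_boundary_path orth_polygon_nonempty)

lemma edge_seg_disjoint:
  assumes op: "orth_polygon vs" and ij: "i < length vs" "j < length vs" "i \<noteq> j"
    "j \<noteq> nxt vs i" "i \<noteq> nxt vs j"
  shows "edge_seg vs i \<inter> edge_seg vs j = {}"
proof -
  have n: "length vs \<ge> 3" and sp: "simple_path (polypath (vs @ [hd vs]))"
    using op by (auto simp: orth_polygon_def boundary_path_def)
  have "edge_seg vs a \<inter> edge_seg vs b = {}"
    if ab: "a < b" "b < length vs" "b \<noteq> nxt vs a" "a \<noteq> nxt vs b" for a b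
  proof -
    have "b \<noteq> Suc a"
      using ab by (simp add: nxt_def)
    moreover have "Suc (length vs - 1) = length vs"
      using n by simp
    then have "\<not> (a = 0 \<and> b = length vs - 1)"
      using ab by (auto simp: nxt_def)
    ultimately have "poly_seg (vs @ [hd vs]) a \<inter> poly_seg (vs @ [hd vs]) b = {}"
      using simple_loop_segments_disjoint[OF n sp ab(1,2)] by blast
    moreover have "vs \<noteq> []" "a < length vs"
      using ab by auto
    ultimately show ?thesis
      using ab poly_seg_boundary by metis
  qed
  then show ?thesis
    using ij by (metis Int_commute linorder_neqE_nat)
qed

lemma consecutive_edges_orthogonal:
  assumes "orth_polygon vs" "i < length vs"
  shows "(vs ! nxt vs i - vs ! i) \<bullet> (vs ! nxt vs (nxt vs i) - vs ! nxt vs i) = 0"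
proof -
  let ?p = "vs ! i" and ?q = "vs ! nxt vs i" and ?r = "vs ! nxt vs (nxt vs i)"
  have "?p \<noteq> ?q" "fst ?p = fst ?q \<or> snd ?p = snd ?q" "fst ?q = fst ?r \<or> snd ?q = snd ?r"
    "fst ?p = fst ?q \<longleftrightarrow> snd ?q = snd ?r"
    using assms nxt_less[OF assms(2)] unfolding orth_polygon_def by blast+
  then show ?thesis
    by (auto simp: inner_prod_def prod_eq_iff)
qed

lemma inner_dvec_self [simp]: "dvec D \<bullet> dvec D = 1"
  by (cases D) auto

lemma norm_dvec [simp]: "norm (dvec D) = 1"
  by (cases D) auto

lemma dvec_orthogonal_decomposition:
  assumes "u \<bullet> dvec D = 0" "u \<noteq> 0"
  shows "z = (z \<bullet> u / (u \<bullet> u)) *\<^sub>R u + (z \<bullet> dvec D) *\<^sub>R dvec D"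
proof -
  obtain u1 u2 where u: "u = (u1, u2)" by fastforce
  obtain z1 z2 where z: "z = (z1, z2)" by fastforce
  show ?thesis
  proof (cases D)
    case N then have "u2 = 0" "u1 \<noteq> 0" using assms u by (auto simp: zero_prod_def)
    then show ?thesis using u z N by (simp add: field_simps)
  next
    case S then have "u2 = 0" "u1 \<noteq> 0" using assms u by (auto simp: zero_prod_def)
    then show ?thesis using u z S by (simp add: field_simps)
  next
    case E then have "u1 = 0" "u2 \<noteq> 0" using assms u by (auto simp: zero_prod_def)
    then show ?thesis using u z E by (simp add: field_simps)
  next
    case W then have "u1 = 0" "u2 \<noteq> 0" using assms u by (auto simp: zero_prod_def)
    then show ?thesis using u z W by (simp add: field_simps)
  qed
qed

lemma orthogonal_to_edge_parallel_dvec: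
  assumes "u \<bullet> dvec D = 0" "u \<noteq> 0" "v \<bullet> u = 0"
  shows "v = (v \<bullet> dvec D) *\<^sub>R dvec D"
  using dvec_orthogonal_decomposition[OF assms(1,2), of v] assms(3) by simp

lemma D_edges_not_consecutive:
  assumes op: "orth_polygon vs" and i: "D_edge vs D i" "D_edge vs D (nxt vs i)"
  shows False
proof -
  let ?u = "vs ! nxt vs i - vs ! i" and ?v = "vs ! nxt vs (nxt vs i) - vs ! nxt vs i"
  have il: "i < length vs" "?u \<bullet> dvec D = 0" "?v \<bullet> dvec D = 0"
    using i by (auto simp: D_edge_def)
  have "?u \<noteq> 0" "?v \<noteq> 0"
    using edge_nondegenerate[OF op] il(1) nxt_less[OF il(1)] by (metis right_minus_eq)+
  moreover have "?v \<bullet> ?u = 0"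
    using consecutive_edges_orthogonal[OF op il(1)] by (simp add: inner_commute)
  ultimately show False
    using orthogonal_to_edge_parallel_dvec[of ?u D ?v] il by simp
qed

lemma adjacent_edges_parallel_dvec:
  assumes op: "orth_polygon vs" and k: "k < length vs"
    and u: "(vs ! nxt vs k - vs ! k) \<bullet> dvec D = 0"
  shows "vs ! prv vs k - vs ! k = ((vs ! prv vs k - vs ! k) \<bullet> dvec D) *\<^sub>R dvec D"
    and "vs ! nxt vs (nxt vs k) - vs ! nxt vs k
           = ((vs ! nxt vs (nxt vs k) - vs ! nxt vs k) \<bullet> dvec D) *\<^sub>R dvec D"
proof -
  have u0: "vs ! nxt vs k - vs ! k \<noteq> 0"
    using edge_nondegenerate[OF op k] by simp
  have "(vs ! k - vs ! prv vs k) \<bullet> (vs ! nxt vs k - vs ! k) = 0"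
    using consecutive_edges_orthogonal[OF op prv_less[OF k]] by (simp add: nxt_prv[OF k])
  then have "(vs ! prv vs k - vs ! k) \<bullet> (vs ! nxt vs k - vs ! k) = 0"
    by (simp add: inner_diff_left)
  then show "vs ! prv vs k - vs ! k = ((vs ! prv vs k - vs ! k) \<bullet> dvec D) *\<^sub>R dvec D"
    by (rule orthogonal_to_edge_parallel_dvec[OF u u0])
  show "vs ! nxt vs (nxt vs k) - vs ! nxt vs k
          = ((vs ! nxt vs (nxt vs k) - vs ! nxt vs k) \<bullet> dvec D) *\<^sub>R dvec D"
    using consecutive_edges_orthogonal[OF op k]
    by (intro orthogonal_to_edge_parallel_dvec[OF u u0]) (simp add: inner_commute)
qed

lemma connected_disjoint_subset_outside:
  assumes "connected C" "C \<inter> X = {}" "x \<in> C" "x \<in> outside X"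
  shows "C \<subseteq> outside X"
  using assms connected_component_def outside_same_component by (metis disjoint_eq_subset_Compl subsetI)

lemma connected_disjoint_subset_inside:
  assumes "connected C" "C \<inter> X = {}" "x \<in> C" "x \<in> inside X"
  shows "C \<subseteq> inside X"
  using assms connected_component_def inside_same_component by (metis disjoint_eq_subset_Compl subsetI)

locale extremity_edge =
  fixes vs :: "(real \<times> real) list" and D :: dir and k :: nat
  assumes polygon: "orth_polygon vs" and extremity: "extremity vs D k"
begin

definition A :: "real \<times> real" where "A = vs ! k"
definition B :: "real \<times> real" where "B = vs ! nxt vs k"
definition u :: "real \<times> real" where "u = B - A"
definition Bd :: "(real \<times> real) set" where "Bd = path_image (boundary_path vs)"

definition along :: "real \<times> real \<Rightarrow> real" where "along w = ((w - A) \<bullet> u) / (u \<bullet> u)"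
definition height :: "real \<times> real \<Rightarrow> real" where "height w = (w - A) \<bullet> dvec D"

definition frame_box :: "real \<Rightarrow> real \<Rightarrow> real \<Rightarrow> real \<Rightarrow> (real \<times> real) set" where
  "frame_box s0 s1 h0 h1 = {w. s0 < along w \<and> along w < s1 \<and> h0 < height w \<and> height w < h1}"

lemma k_less: "k < length vs"
  using extremity by (simp add: extremity_def D_edge_def)

lemma u_perp: "u \<bullet> dvec D = 0"
  using extremity by (simp add: extremity_def D_edge_def u_def A_def B_def)

lemma dvec_perp_u: "dvec D \<bullet> u = 0"
  using u_perp by (simp add: inner_commute)

lemma u_nonzero: "u \<noteq> 0"
  using edge_nondegenerate[OF polygon k_less] by (simp add: u_def A_def B_def)

lemma u_inner_pos: "0 < u \<bullet> u"
  using u_nonzero by simp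

lemma frame_decomposition: "w = A + along w *\<^sub>R u + height w *\<^sub>R dvec D"
  using dvec_orthogonal_decomposition[OF u_perp u_nonzero, of "w - A"]
  by (simp add: along_def height_def algebra_simps)

lemma along_frame [simp]: "along (A + s *\<^sub>R u + h *\<^sub>R dvec D) = s"
  using dvec_perp_u u_inner_pos by (simp add: along_def inner_add_left)

lemma height_frame [simp]: "height (A + s *\<^sub>R u + h *\<^sub>R dvec D) = h"
  using u_perp by (simp add: height_def inner_add_left)

lemma frame_eq_iff: "w = A + s *\<^sub>R u + h *\<^sub>R dvec D \<longleftrightarrow> along w = s \<and> height w = h"
  using frame_decomposition[of w] by auto

lemma along_segment [simp]: "along (A + s *\<^sub>R u) = s"
  and height_segment [simp]: "height (A + s *\<^sub>R u) = 0"
  using along_frame[of s 0] height_frame[of s 0] by simp_all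

lemma along_A [simp]: "along A = 0" and height_A [simp]: "height A = 0"
  and along_B [simp]: "along B = 1" and height_B [simp]: "height B = 0"
  using along_frame[of 0 0] height_frame[of 0 0] along_frame[of 1 0] height_frame[of 1 0]
  by (simp_all add: u_def)

lemma along_diff_le: "\<bar>along w - along z\<bar> \<le> dist w z / norm u"
proof -
  have nu: "0 < norm u" "u \<bullet> u = norm u * norm u"
    using u_nonzero by (simp_all add: power2_eq_square flip: power2_norm_eq_inner)
  have "\<bar>along w - along z\<bar> = \<bar>(w - z) \<bullet> u\<bar> / (norm u * norm u)"
    using nu by (simp add: along_def inner_diff_left abs_divide flip: diff_divide_distrib)
  also have "\<dots> \<le> norm (w - z) * norm u / (norm u * norm u)"
    using Cauchy_Schwarz_ineq2[of "w - z" u] by (rule divide_right_mono) simp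
  also have "\<dots> = dist w z / norm u"
    using nu by (simp add: dist_norm)
  finally show ?thesis .
qed

lemma height_diff_le: "\<bar>height w - height z\<bar> \<le> dist w z"
proof -
  have "height w - height z = (w - z) \<bullet> dvec D"
    by (simp add: height_def inner_diff_left)
  then show ?thesis
    using Cauchy_Schwarz_ineq2[of "w - z" "dvec D"] by (simp add: dist_norm)
qed

lemma edge_seg_coords: "edge_seg vs k = {w. height w = 0 \<and> 0 \<le> along w \<and> along w \<le> 1}"
proof -
  have "edge_seg vs k = {A + t *\<^sub>R u | t. 0 \<le> t \<and> t \<le> 1}"
    by (auto simp: edge_seg_def closed_segment_def A_def B_def u_def algebra_simps)
  also have "\<dots> = {w. height w = 0 \<and> 0 \<le> along w \<and> along w \<le> 1}"
  proof (intro set_eqI iffI)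
    fix w assume "w \<in> {w. height w = 0 \<and> 0 \<le> along w \<and> along w \<le> 1}"
    then show "w \<in> {A + t *\<^sub>R u | t. 0 \<le> t \<and> t \<le> 1}"
      using frame_decomposition[of w] by force
  qed auto
  finally show ?thesis .
qed

lemma connected_frame_box: "connected (frame_box s0 s1 h0 h1)"
proof -
  have "frame_box s0 s1 h0 h1 =
      {w. s0 * (u \<bullet> u) + A \<bullet> u < u \<bullet> w} \<inter> {w. u \<bullet> w < s1 * (u \<bullet> u) + A \<bullet> u} \<inter>
      {w. h0 + A \<bullet> dvec D < dvec D \<bullet> w} \<inter> {w. dvec D \<bullet> w < h1 + A \<bullet> dvec D}"
    using u_inner_pos by (auto simp: frame_box_def along_def height_def inner_diff_left
        inner_diff_right inner_commute field_simps)
  then show ?thesis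
    by (metis convex_Int convex_halfspace_lt convex_halfspace_gt convex_connected)
qed

end
context extremity_edge
begin

definition hprev :: real where "hprev = height (vs ! prv vs k)"
definition hnext :: real where "hnext = height (vs ! nxt vs (nxt vs k))"

lemma prev_vertex_frame: "vs ! prv vs k = A + hprev *\<^sub>R dvec D"
  using adjacent_edges_parallel_dvec(1)[OF polygon k_less, of D] u_perp
  by (simp add: hprev_def height_def A_def B_def u_def algebra_simps)

lemma next_vertex_frame: "vs ! nxt vs (nxt vs k) = B + hnext *\<^sub>R dvec D"
proof -
  have "vs ! nxt vs (nxt vs k) - B = ((vs ! nxt vs (nxt vs k) - B) \<bullet> dvec D) *\<^sub>R dvec D"
    using adjacent_edges_parallel_dvec(2)[OF polygon k_less, of D] u_perp
    by (simp add: A_def B_def u_def)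
  moreover have "(vs ! nxt vs (nxt vs k) - B) \<bullet> dvec D = hnext"
    using height_B by (simp add: hnext_def height_def inner_diff_left)
  ultimately show ?thesis
    by (metis add.commute diff_add_cancel)
qed

lemma hprev_nonzero: "hprev \<noteq> 0"
  using edge_nondegenerate[OF polygon prv_less[OF k_less]] prev_vertex_frame
  by (auto simp: nxt_prv[OF k_less] A_def)

lemma hnext_nonzero: "hnext \<noteq> 0"
  using edge_nondegenerate[OF polygon nxt_less[OF k_less]] next_vertex_frame
  by (auto simp: B_def)

lemma prev_edge_coords:
  assumes "w \<in> edge_seg vs (prv vs k)"
  shows "along w = 0 \<and> (\<exists>t\<in>{0..1}. height w = t * hprev)"
proof -
  obtain t where "0 \<le> t" "t \<le> 1" "w = (1 - t) *\<^sub>R (A + hprev *\<^sub>R dvec D) + t *\<^sub>R A"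
    using assms by (auto simp: edge_seg_def nxt_prv[OF k_less] prev_vertex_frame closed_segment_def
        A_def)
  then have "w = A + 0 *\<^sub>R u + ((1 - t) * hprev) *\<^sub>R dvec D" "1 - t \<in> {0..1}"
    by (auto simp: algebra_simps)
  then show ?thesis
    unfolding frame_eq_iff by blast
qed

lemma next_edge_coords:
  assumes "w \<in> edge_seg vs (nxt vs k)"
  shows "along w = 1 \<and> (\<exists>t\<in>{0..1}. height w = t * hnext)"
proof -
  obtain t where "0 \<le> t" "t \<le> 1" "w = (1 - t) *\<^sub>R B + t *\<^sub>R (B + hnext *\<^sub>R dvec D)"
    using assms by (auto simp: edge_seg_def next_vertex_frame closed_segment_def B_def)
  then have "w = A + 1 *\<^sub>R u + (t * hnext) *\<^sub>R dvec D" "t \<in> {0..1}"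
    by (auto simp: u_def algebra_simps)
  then show ?thesis
    unfolding frame_eq_iff by blast
qed

lemma edge_point_near:
  assumes "- r \<le> along w" "along w \<le> 1 + r" "\<bar>height w\<bar> < r"
  shows "\<exists>z\<in>edge_seg vs k. dist w z < r * (norm u + 1)"
proof
  define s where "s = max 0 (min 1 (along w))"
  show "A + s *\<^sub>R u \<in> edge_seg vs k"
    by (simp add: edge_seg_coords s_def)
  have "w - (A + s *\<^sub>R u) = (along w - s) *\<^sub>R u + height w *\<^sub>R dvec D"
    by (subst frame_decomposition[of w]) (simp add: algebra_simps)
  then have "dist w (A + s *\<^sub>R u) \<le> \<bar>along w - s\<bar> * norm u + \<bar>height w\<bar>"
    unfolding dist_norm by (metis norm_dvec norm_scaleR norm_triangle_ineq mult.right_neutral)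
  also have "\<dots> < r * norm u + r"
    using assms by (intro add_le_less_mono mult_right_mono) (auto simp: s_def)
  finally show "dist w (A + s *\<^sub>R u) < r * (norm u + 1)"
    by (simp add: algebra_simps)
qed

lemma boundary_near_edge_exists:
  "\<exists>\<rho>>0. \<forall>w\<in>Bd. - \<rho> < along w \<and> along w < 1 + \<rho> \<and> \<bar>height w\<bar> < \<rho> \<longrightarrow>
      w \<in> edge_seg vs k \<union> edge_seg vs (prv vs k) \<union> edge_seg vs (nxt vs k)"
proof -
  define Oth where "Oth = (\<Union>i\<in>{i. i < length vs \<and> i \<notin> {prv vs k, k, nxt vs k}}. edge_seg vs i)"
  have Bd_sub: "Bd \<subseteq> edge_seg vs k \<union> edge_seg vs (prv vs k) \<union> edge_seg vs (nxt vs k) \<union> Oth"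
    by (auto simp: Bd_def path_image_boundary_path orth_polygon_nonempty[OF polygon] Oth_def)
  have "edge_seg vs k \<inter> edge_seg vs i = {}"
    if "i < length vs" "i \<notin> {prv vs k, k, nxt vs k}" for i
  proof -
    have "k \<noteq> nxt vs i"
      using that prv_nxt[OF that(1)] by auto
    then show ?thesis
      using that edge_seg_disjoint[OF polygon k_less, of i] by auto
  qed
  then have "edge_seg vs k \<inter> Oth = {}"
    by (auto simp: Oth_def)
  moreover have "closed Oth"
    unfolding Oth_def by (intro closed_UN) (auto simp: edge_seg_def)
  ultimately obtain d0 where d0: "d0 > 0" "\<forall>x\<in>edge_seg vs k. \<forall>y\<in>Oth. d0 \<le> dist x y"
    using separate_compact_closed[of "edge_seg vs k" Oth] by (auto simp: edge_seg_def)
  define \<rho> where "\<rho> = d0 / (norm u + 1)"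
  have "norm u + 1 > 0"
    by (simp add: add_nonneg_pos)
  then have "\<rho> > 0" "\<rho> * (norm u + 1) = d0"
    using d0(1) by (simp_all add: \<rho>_def)
  moreover have "w \<notin> Oth" if "- \<rho> < along w" "along w < 1 + \<rho>" "\<bar>height w\<bar> < \<rho>" for w
    using edge_point_near[of \<rho> w] that d0(2) \<open>\<rho> * (norm u + 1) = d0\<close>
    by (force simp: dist_commute)
  ultimately show ?thesis
    using Bd_sub by blast
qed

end
context extremity_edge
begin

definition \<rho> :: real where
  "\<rho> = (SOME \<rho>. \<rho> > 0 \<and> (\<forall>w\<in>Bd. - \<rho> < along w \<and> along w < 1 + \<rho> \<and> \<bar>height w\<bar> < \<rho> \<longrightarrow>
      w \<in> edge_seg vs k \<union> edge_seg vs (prv vs k) \<union> edge_seg vs (nxt vs k)))"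

lemma rho_pos: "0 < \<rho>"
  using someI_ex[OF boundary_near_edge_exists] unfolding \<rho>_def by blast

lemma boundary_near_edge_adjacent:
  assumes "w \<in> Bd" "- \<rho> < along w" "along w < 1 + \<rho>" "\<bar>height w\<bar> < \<rho>"
  shows "w \<in> edge_seg vs k \<union> edge_seg vs (prv vs k) \<union> edge_seg vs (nxt vs k)"
  using someI_ex[OF boundary_near_edge_exists] assms unfolding \<rho>_def by blast

lemma boundary_near_edge_interior:
  assumes "w \<in> Bd" "0 < along w" "along w < 1" "\<bar>height w\<bar> < \<rho>"
  shows "height w = 0"
  using boundary_near_edge_adjacent[of w] assms rho_pos prev_edge_coords[of w] next_edge_coords[of w]
  by (auto simp: edge_seg_coords)

lemma edge_subset_boundary: "edge_seg vs k \<subseteq> Bd"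
  using edge_seg_subset_boundary[OF polygon k_less] by (simp add: Bd_def)

lemma boundary_subset_closure_outside: "Bd \<subseteq> closure (outside Bd)"
  using polygon simple_loop_image_subset_closure_outside boundary_path_closed orth_polygon_nonempty
  by (auto simp: Bd_def orth_polygon_def)

lemma below_edge_inside: "frame_box 0 1 (- \<rho>) 0 \<subseteq> inside Bd"
proof -
  obtain \<epsilon> where \<epsilon>: "\<epsilon> > 0" "\<forall>t. 0 < t \<and> t < \<epsilon> \<longrightarrow> midpoint A B - t *\<^sub>R dvec D \<in> inside Bd"
    using extremity by (auto simp: extremity_def D_edge_def poly_interior_def Bd_def A_def B_def)
  define t where "t = min \<epsilon> \<rho> / 2"
  have t: "0 < t" "t < \<epsilon>" "t < \<rho>"
    using \<epsilon>(1) rho_pos by (auto simp: t_def)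
  have "along (midpoint A B - t *\<^sub>R dvec D) = 1/2 \<and> height (midpoint A B - t *\<^sub>R dvec D) = - t"
    unfolding frame_eq_iff[symmetric] by (auto simp: midpoint_def u_def prod_eq_iff field_simps)
  then have "midpoint A B - t *\<^sub>R dvec D \<in> frame_box 0 1 (- \<rho>) 0"
    using t by (simp add: frame_box_def)
  moreover have "midpoint A B - t *\<^sub>R dvec D \<in> inside Bd"
    using \<epsilon>(2) t by blast
  moreover have "frame_box 0 1 (- \<rho>) 0 \<inter> Bd = {}"
    using boundary_near_edge_interior by (force simp: frame_box_def)
  ultimately show ?thesis
    using connected_disjoint_subset_inside[OF connected_frame_box] by blast
qed

lemma outside_near_midpoint_above:
  assumes w: "w \<in> outside Bd" "dist w (A + (1/2) *\<^sub>R u) < min \<rho> (norm u / 2)"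
  shows "w \<in> frame_box 0 1 0 \<rho>"
proof -
  define M where "M = A + (1/2) *\<^sub>R u"
  have nu: "0 < norm u"
    using u_nonzero by simp
  have "\<bar>along w - 1/2\<bar> \<le> dist w M / norm u"
    using along_diff_le[of w M] by (simp add: M_def)
  also have "\<dots> < (norm u / 2) / norm u"
    using w(2) nu by (simp add: M_def divide_strict_right_mono)
  finally have along: "0 < along w" "along w < 1"
    using nu unfolding abs_less_iff by simp_all
  moreover have "\<bar>height w\<bar> < \<rho>"
    using height_diff_le[of w M] w(2) by (simp add: M_def)
  moreover have "height w \<noteq> 0"
  proof
    assume "height w = 0"
    then have "w \<in> edge_seg vs k"
      using along by (simp add: edge_seg_coords)
    then show False
      using w(1) edge_subset_boundary outside_no_overlap by blast
  qed
  moreover have "w \<notin> frame_box 0 1 (- \<rho>) 0"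
    using w(1) below_edge_inside inside_Int_outside by blast
  ultimately show ?thesis
    by (auto simp: frame_box_def)
qed

text \<open>Here the Jordan curve theorem enters: the edge is approached from the unbounded
  complementary component, and near its midpoint that component can only lie above the edge.\<close>
lemma above_edge_outside: "frame_box 0 1 0 \<rho> \<subseteq> outside Bd"
proof -
  have "A + (1/2) *\<^sub>R u \<in> edge_seg vs k"
    by (simp add: edge_seg_coords)
  then have "A + (1/2) *\<^sub>R u \<in> closure (outside Bd)"
    using edge_subset_boundary boundary_subset_closure_outside by blast
  moreover have "0 < min \<rho> (norm u / 2)"
    using rho_pos u_nonzero by simp
  ultimately obtain w where "w \<in> outside Bd" "dist w (A + (1/2) *\<^sub>R u) < min \<rho> (norm u / 2)"
    unfolding closure_approachable by blast
  moreover have "frame_box 0 1 0 \<rho> \<inter> Bd = {}"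
    using boundary_near_edge_interior by (force simp: frame_box_def)
  ultimately show ?thesis
    using connected_disjoint_subset_outside[OF connected_frame_box] outside_near_midpoint_above
    by blast
qed

text \<open>At a convex end vertex of the edge the interior enters the quadrant spanned by the
  two incident edges; that quadrant must therefore avoid the region just above the edge.\<close>
lemma end_vertex_diagonal_not_up:
  assumes "convex_vertex vs i" "vs ! i = A + s0 *\<^sub>R u"
    and "(vs ! prv vs i - vs ! i) + (vs ! nxt vs i - vs ! i) = s1 *\<^sub>R u + c *\<^sub>R dvec D"
    and "(s0 = 0 \<and> s1 = 1) \<or> (s0 = 1 \<and> s1 = -1)"
  shows "c \<le> 0"
proof (rule ccontr)
  assume "\<not> c \<le> 0"
  obtain \<epsilon> where \<epsilon>: "\<epsilon> > 0" "\<forall>t. 0 < t \<and> t < \<epsilon> \<longrightarrow>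
      vs ! i + t *\<^sub>R ((vs ! prv vs i - vs ! i) + (vs ! nxt vs i - vs ! i)) \<in> inside Bd"
    using assms(1) by (auto simp: convex_vertex_def poly_interior_def Bd_def)
  define t where "t = min (\<epsilon> / 2) (min (1/2) (\<rho> / (2 * c)))"
  have t: "0 < t" "t < \<epsilon>" "t < 1"
    using \<epsilon>(1) rho_pos \<open>\<not> c \<le> 0\<close> by (auto simp: t_def)
  have "t \<le> \<rho> / (2 * c)"
    by (simp add: t_def)
  then have "t * c < \<rho>"
    using rho_pos \<open>\<not> c \<le> 0\<close> by (simp add: field_simps)
  have "vs ! i + t *\<^sub>R ((vs ! prv vs i - vs ! i) + (vs ! nxt vs i - vs ! i))
      = A + (s0 + t * s1) *\<^sub>R u + (t * c) *\<^sub>R dvec D"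
    using assms(2,3) by (simp add: algebra_simps)
  then have "A + (s0 + t * s1) *\<^sub>R u + (t * c) *\<^sub>R dvec D \<in> inside Bd"
    using \<epsilon>(2) t by metis
  moreover have "0 < s0 + t * s1" "s0 + t * s1 < 1" "0 < t * c"
    using t assms(4) \<open>\<not> c \<le> 0\<close> by auto
  then have "A + (s0 + t * s1) *\<^sub>R u + (t * c) *\<^sub>R dvec D \<in> outside Bd"
    using \<open>t * c < \<rho>\<close> above_edge_outside by (auto simp: frame_box_def)
  ultimately show False
    using inside_Int_outside by blast
qed

lemma hprev_neg: "hprev < 0"
proof -
  have "hprev \<le> 0"
  proof (rule end_vertex_diagonal_not_up)
    show "convex_vertex vs k"
      using extremity by (simp add: extremity_def)
    show "vs ! k = A + 0 *\<^sub>R u"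
      by (simp add: A_def)
    show "(vs ! prv vs k - vs ! k) + (vs ! nxt vs k - vs ! k) = 1 *\<^sub>R u + hprev *\<^sub>R dvec D"
      by (simp add: prev_vertex_frame u_def algebra_simps flip: A_def B_def)
  qed simp
  then show ?thesis
    using hprev_nonzero by simp
qed

lemma hnext_neg: "hnext < 0"
proof -
  have "hnext \<le> 0"
  proof (rule end_vertex_diagonal_not_up)
    show "convex_vertex vs (nxt vs k)"
      using extremity by (simp add: extremity_def)
    show "vs ! nxt vs k = A + 1 *\<^sub>R u"
      by (simp add: u_def B_def)
    show "(vs ! prv vs (nxt vs k) - vs ! nxt vs k) + (vs ! nxt vs (nxt vs k) - vs ! nxt vs k)
        = (-1) *\<^sub>R u + hnext *\<^sub>R dvec D"
      by (simp add: prv_nxt[OF k_less] next_vertex_frame u_def algebra_simps flip: A_def B_def)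
  qed simp
  then show ?thesis
    using hnext_nonzero by simp
qed

end
context extremity_edge
begin

lemma boundary_near_edge:
  assumes "w \<in> Bd" "- \<rho> < along w" "along w < 1 + \<rho>" "\<bar>height w\<bar> < \<rho>"
  shows "height w \<le> 0 \<and> 0 \<le> along w \<and> along w \<le> 1"
proof -
  have "t * hprev \<le> 0" "t * hnext \<le> 0" if "t \<in> {0..1}" for t
    using that hprev_neg hnext_neg by (auto simp: mult_nonneg_nonpos)
  then show ?thesis
    using boundary_near_edge_adjacent[OF assms] prev_edge_coords[of w] next_edge_coords[of w]
    by (auto simp: edge_seg_coords)
qed

lemma frame_point_in_box:
  "s0 < s \<Longrightarrow> s < s1 \<Longrightarrow> h0 < h \<Longrightarrow> h < h1 \<Longrightarrow> A + s *\<^sub>R u + h *\<^sub>R dvec D \<in> frame_box s0 s1 h0 h1"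
  by (simp add: frame_box_def)

lemma frame_box_outside:
  assumes "frame_box s0 s1 h0 h1 \<inter> Bd = {}" "x \<in> frame_box s0 s1 h0 h1" "x \<in> outside Bd"
  shows "frame_box s0 s1 h0 h1 \<subseteq> outside Bd"
  using connected_disjoint_subset_outside[OF connected_frame_box assms] .

lemma above_strip_outside: "frame_box (- \<rho>) (1 + \<rho>) 0 \<rho> \<subseteq> outside Bd"
proof (rule frame_box_outside)
  show "frame_box (- \<rho>) (1 + \<rho>) 0 \<rho> \<inter> Bd = {}"
    using boundary_near_edge by (force simp: frame_box_def)
  show "A + (1/2) *\<^sub>R u + (\<rho>/2) *\<^sub>R dvec D \<in> frame_box (- \<rho>) (1 + \<rho>) 0 \<rho>"
    using rho_pos by (intro frame_point_in_box) auto
  have "A + (1/2) *\<^sub>R u + (\<rho>/2) *\<^sub>R dvec D \<in> frame_box 0 1 0 \<rho>"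
    using rho_pos by (intro frame_point_in_box) auto
  then show "A + (1/2) *\<^sub>R u + (\<rho>/2) *\<^sub>R dvec D \<in> outside Bd"
    using above_edge_outside by blast
qed

lemma left_of_edge_outside: "frame_box (- \<rho>) 0 (- \<rho>) \<rho> \<subseteq> outside Bd"
proof (rule frame_box_outside)
  show "frame_box (- \<rho>) 0 (- \<rho>) \<rho> \<inter> Bd = {}"
    using boundary_near_edge by (force simp: frame_box_def)
  show "A + (- \<rho>/2) *\<^sub>R u + (\<rho>/2) *\<^sub>R dvec D \<in> frame_box (- \<rho>) 0 (- \<rho>) \<rho>"
    using rho_pos by (intro frame_point_in_box) auto
  have "A + (- \<rho>/2) *\<^sub>R u + (\<rho>/2) *\<^sub>R dvec D \<in> frame_box (- \<rho>) (1 + \<rho>) 0 \<rho>"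
    using rho_pos by (intro frame_point_in_box) auto
  then show "A + (- \<rho>/2) *\<^sub>R u + (\<rho>/2) *\<^sub>R dvec D \<in> outside Bd"
    using above_strip_outside by blast
qed

lemma right_of_edge_outside: "frame_box 1 (1 + \<rho>) (- \<rho>) \<rho> \<subseteq> outside Bd"
proof (rule frame_box_outside)
  show "frame_box 1 (1 + \<rho>) (- \<rho>) \<rho> \<inter> Bd = {}"
    using boundary_near_edge by (force simp: frame_box_def)
  show "A + (1 + \<rho>/2) *\<^sub>R u + (\<rho>/2) *\<^sub>R dvec D \<in> frame_box 1 (1 + \<rho>) (- \<rho>) \<rho>"
    using rho_pos by (intro frame_point_in_box) auto
  have "A + (1 + \<rho>/2) *\<^sub>R u + (\<rho>/2) *\<^sub>R dvec D \<in> frame_box (- \<rho>) (1 + \<rho>) 0 \<rho>"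
    using rho_pos by (intro frame_point_in_box) auto
  then show "A + (1 + \<rho>/2) *\<^sub>R u + (\<rho>/2) *\<^sub>R dvec D \<in> outside Bd"
    using above_strip_outside by blast
qed

definition \<delta> :: real where "\<delta> = min \<rho> (\<rho> * norm u)"

lemma delta_pos: "0 < \<delta>"
  using rho_pos u_nonzero by (simp add: \<delta>_def)

lemma close_in_frame:
  assumes "dist w z < \<delta>"
  shows "\<bar>along w - along z\<bar> < \<rho>" "\<bar>height w - height z\<bar> < \<rho>"
proof -
  have "0 < norm u"
    using u_nonzero by simp
  then have "dist w z / norm u < \<rho>"
    using assms by (simp add: \<delta>_def divide_less_eq)
  then show "\<bar>along w - along z\<bar> < \<rho>"
    using along_diff_le[of w z] by linarith
  show "\<bar>height w - height z\<bar> < \<rho>"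
    using height_diff_le[of w z] assms by (simp add: \<delta>_def)
qed

lemma region_not_outside: "w \<in> poly_region vs \<Longrightarrow> w \<notin> outside Bd"
  unfolding poly_region_def poly_interior_def Bd_def
  using inside_Int_outside outside_no_overlap by blast

lemma near_edge_height_nonpos:
  assumes "w \<in> poly_region vs" "z \<in> edge_seg vs k" "dist w z < \<delta>"
  shows "height w \<le> 0"
proof (rule ccontr)
  assume "\<not> height w \<le> 0"
  with assms(2) close_in_frame[OF assms(3)] have "w \<in> frame_box (- \<rho>) (1 + \<rho>) 0 \<rho>"
    by (auto simp: frame_box_def edge_seg_coords abs_less_iff)
  then show False
    using above_strip_outside region_not_outside[OF assms(1)] by blast
qed

lemma near_A_along_nonneg:
  assumes "w \<in> poly_region vs" "dist w A < \<delta>"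
  shows "0 \<le> along w"
proof (rule ccontr)
  assume "\<not> 0 \<le> along w"
  with close_in_frame[OF assms(2)] have "w \<in> frame_box (- \<rho>) 0 (- \<rho>) \<rho>"
    by (auto simp: frame_box_def abs_less_iff)
  then show False
    using left_of_edge_outside region_not_outside[OF assms(1)] by blast
qed

lemma near_B_along_le_one:
  assumes "w \<in> poly_region vs" "dist w B < \<delta>"
  shows "along w \<le> 1"
proof (rule ccontr)
  assume "\<not> along w \<le> 1"
  with close_in_frame[OF assms(2)] have "w \<in> frame_box 1 (1 + \<rho>) (- \<rho>) \<rho>"
    by (auto simp: frame_box_def abs_less_iff)
  then show False
    using right_of_edge_outside region_not_outside[OF assms(1)] by blast
qed

end
lemma connected_in_halfplane_if_isolated:
  fixes K Q :: "(real \<times> real) set"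
  assumes K: "connected K" "q \<in> K" "K \<subseteq> Q" and KL: "connected (K \<inter> {w. (w - q) \<bullet> m = 0})"
    and iso: "r > 0" "\<forall>w\<in>Q. w \<noteq> q \<and> dist w q < r \<longrightarrow> (w - q) \<bullet> m < 0"
  shows "\<forall>w\<in>K. (w - q) \<bullet> m \<le> 0"
proof (rule connected_nonpos_if_nonpos_near_zeros[OF _ K(1,2) singletonI])
  show "continuous_on UNIV (\<lambda>w. (w - q) \<bullet> m)"
    by (intro continuous_intros)
  have "K \<inter> {w. (w - q) \<bullet> m = 0} = {q}"
    using K iso by (intro connected_isolated_point[OF KL]) (auto simp: not_le[symmetric])
  then show "\<forall>w\<in>K. (w - q) \<bullet> m = 0 \<longrightarrow> w \<in> {q}"
    by blast
  show "\<forall>z\<in>{q}. \<forall>w\<in>K. dist w z < r \<longrightarrow> (w - q) \<bullet> m \<le> 0"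
  proof (intro ballI impI)
    fix z w assume "z \<in> {q}" "w \<in> K" "dist w z < r"
    then show "(w - q) \<bullet> m \<le> 0"
      using K(3) iso(2) by (cases "w = q") (auto intro: less_imp_le)
  qed
qed (use iso in simp)

lemma path_first_zero:
  fixes g :: "real \<Rightarrow> 'a::metric_space" and f :: "'a \<Rightarrow> real"
  assumes "path g" "continuous_on UNIV f" "0 < f (pathstart g)" "f (pathfinish g) \<le> 0"
  obtains \<tau> where "0 < \<tau>" "\<tau> \<le> 1" "f (g \<tau>) = 0" "\<And>s. 0 \<le> s \<Longrightarrow> s < \<tau> \<Longrightarrow> 0 < f (g s)"
proof -
  define S where "S = {w. 0 < f w}"
  have "open S"
    unfolding S_def using open_Collect_less[of "\<lambda>_. 0" f] assms(2) by simp
  then have int: "interior S = S"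
    by (rule interior_open)
  have "closure S \<subseteq> {w. 0 \<le> f w}"
    unfolding S_def using assms(2) by (intro closure_minimal closed_Collect_le) auto
  moreover obtain \<tau> where \<tau>: "0 \<le> \<tau>" "\<tau> \<le> 1" "\<And>x. 0 \<le> x \<and> x < \<tau> \<Longrightarrow> g x \<in> interior S"
    "g \<tau> \<notin> interior S" "\<tau> = 0 \<or> g \<tau> \<in> closure S"
    using subpath_to_frontier_explicit[OF assms(1), of S] assms(4) by (auto simp: S_def)
  moreover have "\<tau> \<noteq> 0"
    using \<tau>(4) assms(3) int by (auto simp: S_def pathstart_def)
  ultimately show thesis
    using int by (intro that[of \<tau>]) (auto simp: S_def)
qed

text \<open>Each open quadrant contains exactly one of the four candidate normals.\<close>
lemma line_at_diagonal_normal: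
  assumes "m \<in> {(- sin \<theta>, cos \<theta>), (sin \<theta>, - cos \<theta>), (- cos \<theta>, - sin \<theta>), (cos \<theta>, sin \<theta>)}"
  shows "\<exists>\<beta>. (\<beta> = \<theta> \<or> \<beta> = \<theta> + pi / 2) \<and> (\<forall>c. line_at \<beta> c = {w. (w - c) \<bullet> m = 0})"
proof -
  have "(w - c) \<bullet> (sin \<beta>, - cos \<beta>) = - ((w - c) \<bullet> (- sin \<beta>, cos \<beta>))"
    for w c :: "real \<times> real" and \<beta>
    by (simp add: inner_prod_def)
  then have "(w - c) \<bullet> (sin \<beta>, - cos \<beta>) = 0 \<longleftrightarrow> (w - c) \<bullet> (- sin \<beta>, cos \<beta>) = 0"
    for w c :: "real \<times> real" and \<beta>
    by simp
  moreover have "\<exists>\<beta>. (\<beta> = \<theta> \<or> \<beta> = \<theta> + pi / 2) \<and> (m = (- sin \<beta>, cos \<beta>) \<or> m = (sin \<beta>, - cos \<beta>))"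
    using assms by (auto simp: sin_add cos_add intro: exI[of _ \<theta>] exI[of _ "\<theta> + pi / 2"])
  ultimately show ?thesis
    by (auto simp: line_at_eq_hyperplane)
qed

lemma line_direction_normal:
  assumes "0 < \<theta>" "\<theta> < pi / 2" "u \<bullet> dvec D = 0" "u \<noteq> 0"
  shows "\<exists>\<beta> m. (\<beta> = \<theta> \<or> \<beta> = \<theta> + pi / 2) \<and> (\<forall>c. line_at \<beta> c = {w. (w - c) \<bullet> m = 0}) \<and>
           m \<bullet> u < 0 \<and> 0 < m \<bullet> dvec D"
proof -
  have sc: "0 < sin \<theta>" "0 < cos \<theta>"
    using assms(1,2) by (auto intro!: sin_gt_zero cos_gt_zero)
  obtain u1 u2 where u: "u = (u1, u2)"
    by fastforce
  have "\<exists>m \<in> {(- sin \<theta>, cos \<theta>), (sin \<theta>, - cos \<theta>), (- cos \<theta>, - sin \<theta>), (cos \<theta>, sin \<theta>)}.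
          m \<bullet> u < 0 \<and> 0 < m \<bullet> dvec D"
  proof (cases D)
    case N
    then have "u2 = 0" "u1 < 0 \<or> 0 < u1"
      using assms(3,4) u by (auto simp: zero_prod_def)
    then show ?thesis
      using N u sc by (intro bexI[of _ "if 0 < u1 then (- sin \<theta>, cos \<theta>) else (cos \<theta>, sin \<theta>)"])
        (auto simp: mult_pos_pos mult_pos_neg mult_neg_pos)
  next
    case S
    then have "u2 = 0" "u1 < 0 \<or> 0 < u1"
      using assms(3,4) u by (auto simp: zero_prod_def)
    then show ?thesis
      using S u sc by (intro bexI[of _ "if 0 < u1 then (- cos \<theta>, - sin \<theta>) else (sin \<theta>, - cos \<theta>)"])
        (auto simp: mult_pos_pos mult_pos_neg mult_neg_pos)
  next
    case E
    then have "u1 = 0" "u2 < 0 \<or> 0 < u2"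
      using assms(3,4) u by (auto simp: zero_prod_def)
    then show ?thesis
      using E u sc by (intro bexI[of _ "if 0 < u2 then (sin \<theta>, - cos \<theta>) else (cos \<theta>, sin \<theta>)"])
        (auto simp: mult_pos_pos mult_pos_neg mult_neg_pos)
  next
    case W
    then have "u1 = 0" "u2 < 0 \<or> 0 < u2"
      using assms(3,4) u by (auto simp: zero_prod_def)
    then show ?thesis
      using W u sc by (intro bexI[of _ "if 0 < u2 then (- cos \<theta>, - sin \<theta>) else (- sin \<theta>, cos \<theta>)"])
        (auto simp: mult_pos_pos mult_pos_neg mult_neg_pos)
  qed
  then show ?thesis
    using line_at_diagonal_normal by blast
qed

lemma add_neg_of_signs:
  fixes a b x y :: real
  assumes "0 \<le> a" "b \<le> 0" "a \<noteq> 0 \<or> b \<noteq> 0" "x < 0" "0 < y"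
  shows "a * x + b * y < 0"
proof (cases "a = 0")
  case True
  then show ?thesis
    using assms by (simp add: mult_neg_pos)
next
  case False
  then have "a * x < 0" "b * y \<le> 0"
    using assms by (simp_all add: mult_pos_neg mult_nonpos_nonneg)
  then show ?thesis
    by simp
qed

context extremity_edge
begin

lemma minus_B_frame: "w - B = (along w - 1) *\<^sub>R u + height w *\<^sub>R dvec D"
  by (subst frame_decomposition[of w]) (simp add: B_def u_def algebra_simps)

lemma minus_A_frame: "w - A = along w *\<^sub>R u + height w *\<^sub>R dvec D"
  by (subst frame_decomposition[of w]) simp

lemma A_B_in_region: "A \<in> poly_region vs" "B \<in> poly_region vs"
  using edge_subset_boundary by (auto simp: poly_region_def Bd_def edge_seg_coords)

lemma A_isolated:
  assumes "m \<bullet> u < 0" "0 < m \<bullet> dvec D"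
  shows "\<forall>w\<in>poly_region vs. w \<noteq> A \<and> dist w A < \<delta> \<longrightarrow> (w - A) \<bullet> m < 0"
proof (intro ballI impI)
  fix w assume w: "w \<in> poly_region vs" "w \<noteq> A \<and> dist w A < \<delta>"
  have "A \<in> edge_seg vs k"
    by (simp add: edge_seg_coords)
  then have h: "height w \<le> 0" "0 \<le> along w"
    using near_edge_height_nonpos near_A_along_nonneg w by auto
  have "along w \<noteq> 0 \<or> height w \<noteq> 0"
    using w(2) frame_eq_iff[of w 0 0] by auto
  then have "along w * (m \<bullet> u) + height w * (m \<bullet> dvec D) < 0"
    using h assms by (intro add_neg_of_signs) auto
  then show "(w - A) \<bullet> m < 0"
    by (simp add: minus_A_frame inner_add_left inner_add_right inner_commute)
qed

lemma B_isolated: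
  assumes "0 < m \<bullet> u" "0 < m \<bullet> dvec D"
  shows "\<forall>w\<in>poly_region vs. w \<noteq> B \<and> dist w B < \<delta> \<longrightarrow> (w - B) \<bullet> m < 0"
proof (intro ballI impI)
  fix w assume w: "w \<in> poly_region vs" "w \<noteq> B \<and> dist w B < \<delta>"
  have "B \<in> edge_seg vs k"
    by (simp add: edge_seg_coords)
  then have h: "height w \<le> 0" "along w - 1 \<le> 0"
    using near_edge_height_nonpos near_B_along_le_one w by auto
  have "along w - 1 \<noteq> 0 \<or> height w \<noteq> 0"
    using w(2) frame_eq_iff[of w 1 0] by (auto simp: B_def u_def)
  then have "(1 - along w) * (- (m \<bullet> u)) + height w * (m \<bullet> dvec D) < 0"
    using h assms by (intro add_neg_of_signs) auto
  then show "(w - B) \<bullet> m < 0"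
    by (simp add: minus_B_frame inner_add_left inner_commute algebra_simps)
qed

lemma on_edge_if_between:
  assumes "mA \<bullet> u < 0" "0 < mB \<bullet> u"
    and "(w - A) \<bullet> mA \<le> 0" "(w - B) \<bullet> mB \<le> 0" "height w = 0"
  shows "w \<in> edge_seg vs k"
proof -
  have "along w * (mA \<bullet> u) \<le> 0" "(along w - 1) * (mB \<bullet> u) \<le> 0"
    using assms(3-5) by (simp_all add: minus_A_frame minus_B_frame inner_add_left inner_commute)
  then have "0 \<le> along w" "along w \<le> 1"
    using assms(1,2) by (simp_all add: mult_le_0_iff)
  then show ?thesis
    using assms(5) by (simp add: edge_seg_coords)
qed

lemma line_meets_edge_line_only_at_B:
  assumes "line_at \<beta> B = {w. (w - B) \<bullet> m = 0}" "m \<bullet> u \<noteq> 0"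
    and "w \<in> line_at \<beta> B" "height w = 0"
  shows "w = B"
proof -
  have "(along w - 1) * (m \<bullet> u) = 0"
    using assms(1,3,4) by (simp add: minus_B_frame inner_add_left inner_commute)
  then have "along w = 1"
    using assms(2) by simp
  then show ?thesis
    using assms(4) frame_eq_iff[of w 1 0] by (simp add: B_def u_def)
qed

lemma no_convex_rise_at_B:
  assumes "convex X" "X \<subseteq> poly_region vs" "B \<in> X" "w \<in> X" "0 < height w"
  shows False
proof -
  define t where "t = min 1 (\<delta> / (2 * (norm (w - B) + 1)))"
  have t: "0 < t" "t \<le> 1" "t * norm (w - B) < \<delta>"
  proof -
    have n: "0 < norm (w - B) + 1"
      by (simp add: add_nonneg_pos)
    show "0 < t" "t \<le> 1"
      using delta_pos n by (simp_all add: t_def)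
    have "t \<le> \<delta> / (2 * (norm (w - B) + 1))"
      by (simp add: t_def)
    then have "t * norm (w - B) + t \<le> \<delta> / 2"
      using n by (simp add: le_divide_eq algebra_simps)
    then show "t * norm (w - B) < \<delta>"
      using delta_pos \<open>0 < t\<close> by linarith
  qed
  define y where "y = B + t *\<^sub>R (w - B)"
  have "y \<in> X"
    using convexD[OF assms(1) assms(4,3), of t "1 - t"] t by (simp add: y_def algebra_simps)
  moreover have "B \<bullet> dvec D = A \<bullet> dvec D"
    using height_B by (simp add: height_def inner_diff_left)
  then have "height y = t * height w"
    by (simp add: y_def height_def inner_add_left inner_diff_left algebra_simps)
  moreover have "dist y B < \<delta>"
    using t by (simp add: y_def dist_norm)
  moreover have "B \<in> edge_seg vs k"
    by (simp add: edge_seg_coords)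
  ultimately have "t * height w \<le> 0"
    using near_edge_height_nonpos assms(2) by (metis subsetD)
  then show False
    using t(1) assms(5) by (simp add: mult_le_0_iff)
qed

end
lemma path_eventually_nonpos:
  fixes g :: "real \<Rightarrow> 'a::metric_space" and f :: "'a \<Rightarrow> real"
  assumes g: "path g" and f: "continuous_on UNIV f"
    and ends: "f (pathstart g) \<le> 0" "f (pathfinish g) < 0"
  obtains t where "0 \<le> t" "t \<le> 1" "t = 0 \<or> f (g t) = 0" "\<And>s. t \<le> s \<Longrightarrow> s \<le> 1 \<Longrightarrow> f (g s) \<le> 0"
proof -
  have "closed {w. 0 \<le> f w}"
    using f by (intro closed_Collect_le) auto
  then obtain t where t: "0 \<le> t" "t \<le> 1" "t = 0 \<or> 0 \<le> f (g t)"
    and after: "\<And>s. t < s \<Longrightarrow> s \<le> 1 \<Longrightarrow> f (g s) < 0"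
    using path_last_visit[OF g] by (metis mem_Collect_eq not_le)
  have fg: "continuous_on {0..1} (f \<circ> g)"
    using g f by (intro continuous_on_compose) (auto simp: path_def intro: continuous_on_subset)
  have "f (g t) \<le> 0"
  proof (rule ccontr)
    assume pos: "\<not> f (g t) \<le> 0"
    moreover have "f (g 1) < 0"
      using ends(2) by (simp add: pathfinish_def)
    ultimately obtain x where "t \<le> x" "x \<le> 1" "f (g x) = 0"
      using IVT2'[of "f \<circ> g" 1 0 t] t continuous_on_subset[OF fg] by force
    then show False
      using after[of x] pos by (cases "x = t") auto
  qed
  then show thesis
    using t after by (intro that[of t]) (auto simp: le_less)
qed

context extremity_edge
begin

lemma height_convex_comb: "height ((1 - t) *\<^sub>R x + t *\<^sub>R y) = (1 - t) * height x + t * height y"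
  by (simp add: height_def inner_add_left inner_diff_left algebra_simps)

lemma continuous_height: "continuous_on UNIV height"
  unfolding height_def by (intro continuous_intros)

lemma connected_touching_edge_below:
  assumes "connected K" "K \<subseteq> poly_region vs" "a \<in> K" "a \<in> edge_seg vs k"
    and "\<forall>w\<in>K. height w = 0 \<longrightarrow> w \<in> edge_seg vs k"
  shows "\<forall>w\<in>K. height w \<le> 0"
  using assms(2) near_edge_height_nonpos
  by (intro connected_nonpos_if_nonpos_near_zeros[OF continuous_height assms(1,3,4,5) delta_pos])
    blast

lemma convex_line_section_no_crossing:
  assumes line: "line_at \<beta> B = {w. (w - B) \<bullet> m = 0}" "0 < m \<bullet> u"
    and X: "convex X" "X \<subseteq> line_at \<beta> B" "X \<subseteq> poly_region vs"
    and w: "w1 \<in> X" "0 < height w1" "w2 \<in> X" "height w2 \<le> 0"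
  shows False
proof -
  define s where "s = height w2 / (height w2 - height w1)"
  have s: "0 \<le> s" "s \<le> 1"
    using w(2,4) by (auto simp: s_def divide_le_eq zero_le_divide_iff)
  define z where "z = (1 - s) *\<^sub>R w2 + s *\<^sub>R w1"
  have "z \<in> X"
    using convexD[OF X(1) w(3,1), of "1 - s" s] s by (simp add: z_def)
  have "height z = (1 - s) * height w2 + s * height w1"
    unfolding z_def height_convex_comb ..
  then have "height z = 0"
    using w(2,4) by (simp add: s_def field_simps)
  moreover have "z \<in> line_at \<beta> B"
    using X(2) \<open>z \<in> X\<close> by blast
  ultimately have "z = B"
    using line_meets_edge_line_only_at_B[OF line(1)] line(2) by simp
  then show False
    using no_convex_rise_at_B[OF X(1,3)] \<open>z \<in> X\<close> w(1,2) by blast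
qed

lemma descent_onto_line_impossible:
  assumes g: "path g" "path_image g \<subseteq> poly_region vs"
    and start: "0 < height (pathstart g)" "(pathstart g - B) \<bullet> m \<le> 0"
    and finish: "(pathfinish g - B) \<bullet> m = 0" "height (pathfinish g) \<le> 0"
    and zeros: "\<forall>w\<in>path_image g. height w = 0 \<and> (w - B) \<bullet> m \<le> 0 \<longrightarrow> w \<in> edge_seg vs k"
    and line: "line_at \<beta> B = {w. (w - B) \<bullet> m = 0}" "0 < m \<bullet> u"
    and X: "convex X" "X \<subseteq> line_at \<beta> B" "X \<subseteq> poly_region vs" "path_image g \<inter> line_at \<beta> B \<subseteq> X"
  shows False
proof -
  obtain \<tau> where \<tau>: "0 < \<tau>" "\<tau> \<le> 1" "height (g \<tau>) = 0" "\<And>s. 0 \<le> s \<Longrightarrow> s < \<tau> \<Longrightarrow> 0 < height (g s)"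
    using path_first_zero[OF g(1) continuous_height start(1) finish(2)] by blast
  have gc: "continuous_on {0..\<tau>} g"
    using g(1) \<tau>(2) by (auto simp: path_def intro: continuous_on_subset)
  have img: "g ` {0..\<tau>} \<subseteq> path_image g"
    using \<tau>(2) by (auto simp: path_image_def)
  show False
  proof (cases "(g \<tau> - B) \<bullet> m \<le> 0")
    case True
    have "\<forall>w\<in>g ` {0..\<tau>}. height w = 0 \<longrightarrow> w \<in> edge_seg vs k"
      using \<tau>(3,4) zeros img True by (force simp: le_less)
    then have "\<forall>w\<in>g ` {0..\<tau>}. height w \<le> 0"
      using img g(2) zeros \<tau>(1,3) True
      by (intro connected_touching_edge_below[of _ "g \<tau>"] connected_continuous_image[OF gc]) auto
    then show False
      using start(1) \<tau>(1) by (force simp: pathstart_def)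
  next
    case False
    have "continuous_on {0..\<tau>} (\<lambda>s. (g s - B) \<bullet> m)"
      using gc by (intro continuous_intros)
    then obtain x where x: "0 \<le> x" "x \<le> \<tau>" "(g x - B) \<bullet> m = 0"
      using IVT'[of "\<lambda>s. (g s - B) \<bullet> m" 0 0 \<tau>] start(2) False \<tau>(1) by (force simp: pathstart_def)
    then have "x < \<tau>"
      using False by (cases "x = \<tau>") auto
    moreover have "g x \<in> path_image g"
      using img x by auto
    ultimately have "g x \<in> X" "0 < height (g x)"
      using x \<tau>(4) X(4) line(1) by auto
    moreover have "pathfinish g \<in> X"
      using finish(1) X(4) line(1) pathfinish_in_path_image by blast
    ultimately show False
      using convex_line_section_no_crossing[OF line X(1-3)] finish(2) by blast
  qed
qed

lemma final_segment_to_A_below: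
  assumes g: "path g" "path_image g \<subseteq> poly_region vs" "pathfinish g = A"
    and t: "0 \<le> t" "t \<le> 1"
    and zeros: "\<forall>w\<in>path_image g. height w = 0 \<and> (w - B) \<bullet> m \<le> 0 \<longrightarrow> w \<in> edge_seg vs k"
    and tail: "\<And>s. t \<le> s \<Longrightarrow> s \<le> 1 \<Longrightarrow> (g s - B) \<bullet> m \<le> 0"
  shows "height (g t) \<le> 0"
proof -
  define K where "K = g ` {t..1}"
  have "continuous_on {t..1} g"
    using g(1) t by (auto simp: path_def intro: continuous_on_subset)
  then have "connected K"
    unfolding K_def by (rule connected_continuous_image) simp
  moreover have "K \<subseteq> path_image g"
    using t by (auto simp: K_def path_image_def)
  moreover have "A \<in> K"
    using t g(3) unfolding K_def pathfinish_def by (intro image_eqI[of _ _ 1]) auto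
  moreover have "\<forall>w\<in>K. height w = 0 \<longrightarrow> w \<in> edge_seg vs k"
    using zeros tail \<open>K \<subseteq> path_image g\<close> by (auto simp: K_def)
  ultimately have "\<forall>w\<in>K. height w \<le> 0"
    using g(2) by (intro connected_touching_edge_below[of _ A]) (auto simp: edge_seg_coords)
  then show ?thesis
    using t by (simp add: K_def)
qed

text \<open>A curve from a point above the edge to A must leave the half-plane of B across the line
  through B and re-enter it at B or below; its section by that line then contains B together
  with points just above B, which lie outside P.\<close>
lemma start_below_if_path_to_A:
  assumes g: "path g" "path_image g \<subseteq> poly_region vs" "pathfinish g = A"
    and HA: "\<forall>w\<in>path_image g. (w - A) \<bullet> mA \<le> 0" "mA \<bullet> u < 0"
    and line: "line_at \<beta> B = {w. (w - B) \<bullet> mB = 0}" "0 < mB \<bullet> u"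
    and conv: "connected (path_image g \<inter> line_at \<beta> B)"
    and start: "(pathstart g - B) \<bullet> mB \<le> 0"
  shows "height (pathstart g) \<le> 0"
proof (rule ccontr)
  assume above: "\<not> height (pathstart g) \<le> 0"
  have zeros: "\<forall>w\<in>path_image g. height w = 0 \<and> (w - B) \<bullet> mB \<le> 0 \<longrightarrow> w \<in> edge_seg vs k"
    using on_edge_if_between[OF HA(2) line(2)] HA(1) by blast
  have "(pathfinish g - B) \<bullet> mB < 0"
    using line(2) g(3) by (simp add: u_def inner_diff_left inner_diff_right inner_commute[of mB])
  moreover have "continuous_on UNIV (\<lambda>w. (w - B) \<bullet> mB)"
    by (intro continuous_intros)
  ultimately obtain t where t: "0 \<le> t" "t \<le> 1" "t = 0 \<or> (g t - B) \<bullet> mB = 0"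
    and tail: "\<And>s. t \<le> s \<Longrightarrow> s \<le> 1 \<Longrightarrow> (g s - B) \<bullet> mB \<le> 0"
    using path_eventually_nonpos[OF g(1), of "\<lambda>w. (w - B) \<bullet> mB"] start by blast
  show False
  proof (cases "height (g t) \<le> 0")
    case False
    then show False
      using final_segment_to_A_below[OF g t(1,2) zeros tail] by simp
  next
    case True
    have "t \<noteq> 0"
      using True above by (auto simp: pathstart_def)
    show False
    proof (rule descent_onto_line_impossible)
      show "path (subpath 0 t g)" "path_image (subpath 0 t g) \<subseteq> poly_region vs"
        using g(1,2) t path_image_subpath_subset[of 0 t g] by auto
      show "0 < height (pathstart (subpath 0 t g))" "(pathstart (subpath 0 t g) - B) \<bullet> mB \<le> 0"
        using above start by (auto simp: pathstart_def subpath_def)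
      show "(pathfinish (subpath 0 t g) - B) \<bullet> mB = 0" "height (pathfinish (subpath 0 t g)) \<le> 0"
        using t \<open>t \<noteq> 0\<close> True by auto
      show "\<forall>w\<in>path_image (subpath 0 t g). height w = 0 \<and> (w - B) \<bullet> mB \<le> 0 \<longrightarrow> w \<in> edge_seg vs k"
        using zeros path_image_subpath_subset[of 0 t g] t by auto
      show "convex (path_image g \<inter> line_at \<beta> B)"
        by (rule connected_subset_line_imp_convex[OF _ conv]) blast
      show "path_image (subpath 0 t g) \<inter> line_at \<beta> B \<subseteq> path_image g \<inter> line_at \<beta> B"
        using path_image_subpath_subset[of 0 t g] t by auto
    qed (use line g(2) in auto)
  qed
qed

end
context extremity_edge
begin

lemma height_eq_level: "height w = level D w - level D A"
  by (simp add: height_def level_def inner_diff_left)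

lemma kernel_below_edge:
  assumes \<theta>: "0 < \<theta>" "\<theta> < pi / 2" and p: "p \<in> kernel_theta (poly_region vs) \<theta>"
  shows "height p \<le> 0 \<and> (height p = 0 \<longrightarrow> p \<in> edge_seg vs k)"
proof -
  obtain \<beta>A mA where \<beta>A: "\<beta>A = \<theta> \<or> \<beta>A = \<theta> + pi / 2"
    and lineA: "\<forall>c. line_at \<beta>A c = {w. (w - c) \<bullet> mA = 0}" and mA: "mA \<bullet> u < 0" "0 < mA \<bullet> dvec D"
    using line_direction_normal[OF \<theta> u_perp u_nonzero] by blast
  obtain \<beta>B mB where \<beta>B: "\<beta>B = \<theta> \<or> \<beta>B = \<theta> + pi / 2"
    and lineB: "\<forall>c. line_at \<beta>B c = {w. (w - c) \<bullet> mB = 0}" and mB: "0 < mB \<bullet> u" "0 < mB \<bullet> dvec D"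
    using line_direction_normal[OF \<theta>, of "- u" D] u_perp u_nonzero by auto
  have sees: "sees_theta (poly_region vs) \<theta> p q" if "q \<in> poly_region vs" for q
    using p that by (simp add: kernel_theta_def)
  obtain gA where gA: "path gA" "path_image gA \<subseteq> poly_region vs" "pathstart gA = p" "pathfinish gA = A"
    and convA: "\<And>\<beta> c. \<beta> = \<theta> \<or> \<beta> = \<theta> + pi / 2 \<Longrightarrow> connected (path_image gA \<inter> line_at \<beta> c)"
    using sees[OF A_B_in_region(1)] unfolding sees_theta_def beta_convex_def by blast
  obtain gB where gB: "path gB" "path_image gB \<subseteq> poly_region vs" "pathstart gB = p" "pathfinish gB = B"
    and convB: "\<And>\<beta> c. \<beta> = \<theta> \<or> \<beta> = \<theta> + pi / 2 \<Longrightarrow> connected (path_image gB \<inter> line_at \<beta> c)"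
    using sees[OF A_B_in_region(2)] unfolding sees_theta_def beta_convex_def by blast
  have HA: "\<forall>w\<in>path_image gA. (w - A) \<bullet> mA \<le> 0"
    using convA[OF \<beta>A, of A] lineA gA(2,4) pathfinish_in_path_image[of gA]
    by (intro connected_in_halfplane_if_isolated[OF connected_path_image[OF gA(1)] _ _ _
          delta_pos A_isolated[OF mA]]) auto
  have HB: "\<forall>w\<in>path_image gB. (w - B) \<bullet> mB \<le> 0"
    using convB[OF \<beta>B, of B] lineB gB(2,4) pathfinish_in_path_image[of gB]
    by (intro connected_in_halfplane_if_isolated[OF connected_path_image[OF gB(1)] _ _ _
          delta_pos B_isolated[OF mB]]) auto
  have pA: "(p - A) \<bullet> mA \<le> 0"
    using HA gA(3) pathstart_in_path_image[of gA] by auto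
  have pB: "(p - B) \<bullet> mB \<le> 0"
    using HB gB(3) pathstart_in_path_image[of gB] by auto
  have "height (pathstart gA) \<le> 0"
    using start_below_if_path_to_A[OF gA(1,2,4) HA mA(1) lineB[rule_format] mB(1) convA[OF \<beta>B]]
      pB gA(3) by simp
  then have "height p \<le> 0"
    using gA(3) by simp
  moreover have "height p = 0 \<longrightarrow> p \<in> edge_seg vs k"
    using on_edge_if_between[OF mA(1) mB(1) pA pB] by blast
  ultimately show ?thesis ..
qed

end

lemma kernel_point_not_above_extremity:
  assumes "orth_polygon vs" "extremity vs D j" "0 < \<theta>" "\<theta> < pi / 2"
    and "p \<in> kernel_theta (poly_region vs) \<theta>" "level D (vs ! j) \<le> level D p"
  shows "level D p = level D (vs ! j) \<and> p \<in> edge_seg vs j"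
proof -
  interpret extremity_edge vs D j
    using assms(1,2) by unfold_locales
  show ?thesis
    using kernel_below_edge[OF assms(3-5)] assms(6) by (auto simp: height_eq_level A_def)
qed

lemma level_extremity_point:
  assumes "orth_polygon vs" "extremity vs D j" "q \<in> edge_seg vs j"
  shows "level D q = level D (vs ! j)"
proof -
  interpret extremity_edge vs D j
    using assms(1,2) by unfold_locales
  show ?thesis
    using assms(3) height_eq_level[of q] by (simp add: edge_seg_coords A_def)
qed

lemma distinct_extremities_disjoint:
  assumes op: "orth_polygon vs" and "extremity vs D i" "extremity vs D j" "i \<noteq> j"
  shows "edge_seg vs i \<inter> edge_seg vs j = {}"
proof -
  have "D_edge vs D i" "D_edge vs D j"
    using assms(2,3) by (simp_all add: extremity_def)
  then have "i < length vs" "j < length vs" "j \<noteq> nxt vs i" "i \<noteq> nxt vs j"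
    using D_edges_not_consecutive[OF op] by (auto simp: D_edge_def)
  then show ?thesis
    using edge_seg_disjoint[OF op] assms(4) by blast
qed

lemma kernel_point_on_extremity_not_below:
  assumes op: "orth_polygon vs" and ext: "extremity vs D k" "extremity vs D j"
    and \<theta>: "0 < \<theta>" "\<theta> < pi / 2"
    and q: "q \<in> kernel_theta (poly_region vs) \<theta>" "q \<in> edge_seg vs j"
    and le: "level D (vs ! k) \<le> level D (vs ! j)"
  shows "level D (vs ! j) = level D (vs ! k) \<and> q \<in> edge_seg vs k"
proof -
  have "level D q = level D (vs ! j)"
    using level_extremity_point[OF op ext(2) q(2)] .
  then show ?thesis
    using kernel_point_not_above_extremity[OF op ext(1) \<theta> q(1)] le by simp
qed

theorem lemma2:
  fixes vs :: "(real \<times> real) list" and D :: dir and k :: nat and \<theta> :: real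
  assumes "orth_polygon vs"
    and "\<exists>i j. i \<noteq> j \<and> extremity vs D i \<and> extremity vs D j"
    and "extremity vs D k"
    and "\<forall>j. extremity vs D j \<longrightarrow> level D (vs ! k) \<le> level D (vs ! j)"
    and "0 < \<theta>" and "\<theta> < pi / 2"
  shows "(\<forall>j. extremity vs D j \<and> level D (vs ! k) < level D (vs ! j) \<longrightarrow>
              edge_seg vs j \<inter> kernel_theta (poly_region vs) \<theta> = {}) \<and>
         (\<forall>j. extremity vs D j \<and> j \<noteq> k \<and> level D (vs ! j) = level D (vs ! k) \<longrightarrow>
              (edge_seg vs k \<union> edge_seg vs j) \<inter> kernel_theta (poly_region vs) \<theta> = {})"
proof (intro conjI allI impI equals0I)
  fix j q
  assume "extremity vs D j \<and> level D (vs ! k) < level D (vs ! j)"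
    and "q \<in> edge_seg vs j \<inter> kernel_theta (poly_region vs) \<theta>"
  then show False
    using kernel_point_on_extremity_not_below[OF assms(1,3) _ assms(5,6), of j q] by auto
next
  fix j q
  assume j: "extremity vs D j \<and> j \<noteq> k \<and> level D (vs ! j) = level D (vs ! k)"
    and q: "q \<in> (edge_seg vs k \<union> edge_seg vs j) \<inter> kernel_theta (poly_region vs) \<theta>"
  then have "q \<in> edge_seg vs k"
    using kernel_point_on_extremity_not_below[OF assms(1,3) _ assms(5,6), of j q] by auto
  moreover have "q \<in> edge_seg vs j"
    using kernel_point_on_extremity_not_below[OF assms(1) _ assms(3,5,6), of j q] j q \<open>q \<in> edge_seg vs k\<close>
    by auto
  ultimately show False
    using distinct_extremities_disjoint[OF assms(1,3), of j] j by blast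
qed

end
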